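(* Let $n,m$ be positive integers and let $R_1,\dots,R_n:\{0,\dots,m\}\to\mathbb{R}$ be convex functions with $R_j(0)=0$. Then for every $k$ with $0\le k\le nm$ there exists an optimal $k$-profile $\mathbf{x}=(x_1,\dots,x_n)$ in which at most one index $j$ satisfies $0<x_j<m$.
   Context: A function $R:\{0,\dots,m\}\to\mathbb{R}$ is convex if $R(x+1)-R(x)$ is non-decreasing in $x$. A $k$-profile is a vector $\mathbf{x}=(x_1,\dots,x_n)$ with $x_j\in\{0,\dots,m\}$ and $\sum_j x_j=k$; it is optimal if its revenue $\sum_j R_j(x_j)$ is maximum among all $k$-profiles. *)

theory Defs
  imports Complex_Main
begin

definition convex_on_grid :: "nat \<Rightarrow> (nat \<Rightarrow> real) \<Rightarrow> bool" where
  "convex_on_grid m R \<longleftrightarrow>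
     (\<forall>x y. x \<le> y \<and> y + 1 \<le> m \<longrightarrow> R (x + 1) - R x \<le> R (y + 1) - R y)"

definition profile :: "nat \<Rightarrow> nat \<Rightarrow> nat \<Rightarrow> (nat \<Rightarrow> nat) \<Rightarrow> bool" where
  "profile n m k x \<longleftrightarrow> (\<forall>j\<in>{1..n}. x j \<le> m) \<and> (\<forall>j. j \<notin> {1..n} \<longrightarrow> x j = 0)
     \<and> (\<Sum>j\<in>{1..n}. x j) = k"

definition revenue :: "nat \<Rightarrow> (nat \<Rightarrow> nat \<Rightarrow> real) \<Rightarrow> (nat \<Rightarrow> nat) \<Rightarrow> real" where
  "revenue n R x = (\<Sum>j\<in>{1..n}. R j (x j))"

definition optimal_profile ::
  "nat \<Rightarrow> nat \<Rightarrow> (nat \<Rightarrow> nat \<Rightarrow> real) \<Rightarrow> nat \<Rightarrow> (nat \<Rightarrow> nat) \<Rightarrow> bool" where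
  "optimal_profile n m R k x \<longleftrightarrow> profile n m k x \<and>
     (\<forall>y. profile n m k y \<longrightarrow> revenue n R y \<le> revenue n R x)"

end

theory Submission
  imports Defs
begin

(* If two coordinates i, j of an optimal profile both lie strictly between 0 and m, fix their
   sum s and vary the split (t, s - t). By convexity of R_i and R_j, the map
   t \<mapsto> R_i t + R_j (s - t) has non-decreasing increments on the feasible range of t, so it
   is maximised at an endpoint, where one of the two coordinates is 0 or m. This exchange keeps
   the profile optimal and removes an interior coordinate, so an optimal profile with the fewest
   interior coordinates has at most one. *)

lemma sum_fun_upd_add:
  fixes f :: "'a \<Rightarrow> 'b::comm_monoid_add"
  assumes "finite A" "i \<in> A"
  shows "sum (f(i := c)) A + f i = sum f A + c"
proof -
  have "sum (f(i := c)) (A - {i}) = sum f (A - {i})"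
    by (rule sum.cong) auto
  then show ?thesis
    using assms by (simp add: sum.remove ac_simps)
qed

lemma sum_fun_upd_pair_add:
  fixes f :: "'a \<Rightarrow> 'b::comm_monoid_add"
  assumes "finite A" "i \<in> A" "j \<in> A" "i \<noteq> j"
  shows "sum (f(i := a, j := b)) A + (f i + f j) = sum f A + (a + b)"
proof -
  have "sum (f(i := a, j := b)) A + (f i + f j) = (sum (f(i := a, j := b)) A + (f(i := a)) j) + f i"
    using assms(4) by (simp add: ac_simps)
  also have "\<dots> = (sum (f(i := a)) A + f i) + b"
    by (metis sum_fun_upd_add[OF assms(1,3)] add.assoc add.commute)
  also have "\<dots> = sum f A + (a + b)"
    by (metis sum_fun_upd_add[OF assms(1,2)] add.assoc)
  finally show ?thesis .
qed

lemma le_max_endpoints_if_increments_mono: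
  fixes g :: "nat \<Rightarrow> real"
  assumes incr_mono: "\<And>u v. lo \<le> u \<Longrightarrow> u \<le> v \<Longrightarrow> v < hi \<Longrightarrow> g (Suc u) - g u \<le> g (Suc v) - g v"
    and "lo \<le> t" "t \<le> hi"
  shows "g t \<le> max (g lo) (g hi)"
proof (cases "t < hi \<and> g (Suc t) - g t < 0")
  case True
  have "g t - g lo = (\<Sum>u = lo..<t. g (Suc u) - g u)"
    using \<open>lo \<le> t\<close> by (rule sum_Suc_diff'[symmetric])
  also have "\<dots> \<le> 0"
    using True incr_mono[of _ t] by (intro sum_nonpos) fastforce
  finally show ?thesis by simp
next
  case False
  have "g (Suc t) - g t \<le> g (Suc v) - g v" if "t \<le> v" "v < hi" for v
    using incr_mono[OF \<open>lo \<le> t\<close> that] .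
  then have "0 \<le> (\<Sum>v = t..<hi. g (Suc v) - g v)"
    using False by (intro sum_nonneg) fastforce
  also have "\<dots> = g hi - g t"
    using \<open>t \<le> hi\<close> by (rule sum_Suc_diff')
  finally show ?thesis by simp
qed

lemma exchange_increments_mono:
  assumes f: "convex_on_grid m f" and h: "convex_on_grid m h"
    and "s - m \<le> u" "u \<le> v" "v < min s m"
  shows "(f (Suc u) + h (s - Suc u)) - (f u + h (s - u))
           \<le> (f (Suc v) + h (s - Suc v)) - (f v + h (s - v))"
proof -
  have "f (Suc u) - f u \<le> f (Suc v) - f v"
    using f assms(4,5) unfolding convex_on_grid_def by simp
  moreover have "h (s - v) - h (s - Suc v) \<le> h (s - u) - h (s - Suc u)"
  proof -
    have "s - v = Suc (s - Suc v)" "s - u = Suc (s - Suc u)"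
      using assms(4,5) by auto
    moreover have "s - Suc v \<le> s - Suc u" "s - Suc u + 1 \<le> m"
      using assms(3-5) by auto
    ultimately show ?thesis
      using h unfolding convex_on_grid_def by (metis Suc_eq_plus1)
  qed
  ultimately show ?thesis by simp
qed

lemma convex_pair_exchange:
  assumes f: "convex_on_grid m f" and h: "convex_on_grid m h" and "a \<le> m" "b \<le> m"
  obtains a' b' where "a' + b' = a + b" "a' \<le> m" "b' \<le> m" "a' \<in> {0, m} \<or> b' \<in> {0, m}"
    and "f a + h b \<le> f a' + h b'"
proof -
  define s where "s = a + b"
  have "f a + h (s - a) \<le> max (f (s - m) + h (s - (s - m))) (f (min s m) + h (s - min s m))"
    using assms(3,4) unfolding s_def
    by (intro le_max_endpoints_if_increments_mono[where g = "\<lambda>t. f t + h (s - t)" for s])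
       (auto intro: exchange_increments_mono[OF f h])
  then have "f a + h b \<le> f (s - m) + h (s - (s - m)) \<or> f a + h b \<le> f (min s m) + h (s - min s m)"
    unfolding s_def le_max_iff_disj by simp
  then show ?thesis
  proof
    assume "f a + h b \<le> f (s - m) + h (s - (s - m))"
    then show ?thesis
      using that[of "s - m" "s - (s - m)"] assms(3,4) unfolding s_def by (cases "a + b \<le> m") auto
  next
    assume "f a + h b \<le> f (min s m) + h (s - min s m)"
    then show ?thesis
      using that[of "min s m" "s - min s m"] assms(3,4) unfolding s_def by (cases "a + b \<le> m") auto
  qed
qed

lemma profile_fun_upd_pair:
  assumes "profile n m k x" "i \<in> {1..n}" "j \<in> {1..n}" "i \<noteq> j"
    and "a \<le> m" "b \<le> m" "a + b = x i + x j"
  shows "profile n m k (x(i := a, j := b))"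
proof -
  have "sum (x(i := a, j := b)) {1..n} + (x i + x j) = sum x {1..n} + (a + b)"
    using assms(2-4) by (intro sum_fun_upd_pair_add) auto
  then show ?thesis
    using assms unfolding profile_def by auto
qed

lemma revenue_fun_upd_pair:
  assumes "i \<in> {1..n}" "j \<in> {1..n}" "i \<noteq> j"
  shows "revenue n R (x(i := a, j := b)) + (R i (x i) + R j (x j))
           = revenue n R x + (R i a + R j b)"
proof -
  have upd: "(\<lambda>l. R l ((x(i := a, j := b)) l)) = (\<lambda>l. R l (x l))(i := R i a, j := R j b)"
    by auto
  show ?thesis
    unfolding revenue_def upd using assms by (intro sum_fun_upd_pair_add) auto
qed

lemma profile_exists:
  assumes "k \<le> n * m"
  shows "\<exists>x. profile n m k x"
  using assms
proof (induction k)
  case 0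
  show ?case
    by (rule exI[of _ "\<lambda>_. 0"]) (simp add: profile_def)
next
  case (Suc k)
  then obtain x where x: "profile n m k x"
    by auto
  have "\<exists>j\<in>{1..n}. x j < m"
  proof (rule ccontr)
    assume "\<not> ?thesis"
    then have "\<forall>j\<in>{1..n}. x j = m"
      using x by (auto simp: profile_def not_less intro: antisym)
    then have "k = n * m"
      using x by (simp add: profile_def)
    with Suc.prems show False
      by simp
  qed
  then obtain j where j: "j \<in> {1..n}" "x j < m"
    by auto
  have "sum (x(j := Suc (x j))) {1..n} + x j = sum x {1..n} + Suc (x j)"
    using j(1) by (intro sum_fun_upd_add) auto
  then have "profile n m (Suc k) (x(j := Suc (x j)))"
    using x j unfolding profile_def by auto
  then show ?case
    by auto
qed

lemma finite_profiles: "finite {x. profile n m k x}"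
proof (rule finite_subset)
  show "{x. profile n m k x}
          \<subseteq> {x. \<forall>j. (j \<in> {1..n} \<longrightarrow> x j \<in> {0..m}) \<and> (j \<notin> {1..n} \<longrightarrow> x j = 0)}"
    by (auto simp: profile_def)
qed (intro finite_set_of_finite_funs; simp)

lemma optimal_profile_exists:
  assumes "k \<le> n * m"
  shows "\<exists>x. optimal_profile n m R k x"
proof -
  let ?P = "{x. profile n m k x}"
  have "?P \<noteq> {}"
    using profile_exists[OF assms] by auto
  then have "Max (revenue n R ` ?P) \<in> revenue n R ` ?P"
    using finite_profiles by (intro Max_in) auto
  then obtain x where "x \<in> ?P" "revenue n R x = Max (revenue n R ` ?P)"
    by auto
  then show ?thesis
    using finite_profiles unfolding optimal_profile_def by auto
qed

definition interior_indices :: "nat \<Rightarrow> nat \<Rightarrow> (nat \<Rightarrow> nat) \<Rightarrow> nat set" where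
  "interior_indices n m x = {j\<in>{1..n}. 0 < x j \<and> x j < m}"

lemma finite_interior_indices [simp]: "finite (interior_indices n m x)"
  by (simp add: interior_indices_def)

lemma optimal_profile_shrink_interior:
  assumes opt: "optimal_profile n m R k x"
    and convex: "\<And>j. j \<in> {1..n} \<Longrightarrow> convex_on_grid m (R j)"
    and i: "i \<in> interior_indices n m x" and j: "j \<in> interior_indices n m x" and "i \<noteq> j"
  obtains y where "optimal_profile n m R k y"
    and "interior_indices n m y \<subset> interior_indices n m x"
proof -
  have ij: "i \<in> {1..n}" "j \<in> {1..n}" "x i < m" "x j < m"
    using i j by (auto simp: interior_indices_def)
  obtain a b where ab: "a + b = x i + x j" "a \<le> m" "b \<le> m" "a \<in> {0, m} \<or> b \<in> {0, m}"
    and gain: "R i (x i) + R j (x j) \<le> R i a + R j b"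
    using convex_pair_exchange[OF convex[OF ij(1)] convex[OF ij(2)]] ij(3,4) by (metis less_imp_le)
  define y where "y = x(i := a, j := b)"
  have "profile n m k y"
    using opt ij ab \<open>i \<noteq> j\<close> unfolding y_def optimal_profile_def
    by (intro profile_fun_upd_pair) auto
  moreover have "revenue n R x \<le> revenue n R y"
    using revenue_fun_upd_pair[OF ij(1,2) \<open>i \<noteq> j\<close>, of R x a b] gain unfolding y_def by simp
  ultimately have "optimal_profile n m R k y"
    using opt unfolding optimal_profile_def by (blast intro: order_trans)
  moreover have "interior_indices n m y \<subseteq> interior_indices n m x"
    using i j unfolding interior_indices_def y_def by auto
  moreover have "i \<notin> interior_indices n m y \<or> j \<notin> interior_indices n m y"
    using ab(4) \<open>i \<noteq> j\<close> unfolding interior_indices_def y_def by auto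
  ultimately show ?thesis
    using that i j by blast
qed

theorem lemma4:
  fixes n m k :: nat and R :: "nat \<Rightarrow> nat \<Rightarrow> real"
  assumes "n > 0" and "m > 0"
    and "\<And>j. j \<in> {1..n} \<Longrightarrow> convex_on_grid m (R j)"
    and "\<And>j. j \<in> {1..n} \<Longrightarrow> R j 0 = 0"
    and "k \<le> n * m"
  shows "\<exists>x. optimal_profile n m R k x \<and> card {j\<in>{1..n}. 0 < x j \<and> x j < m} \<le> 1"
proof -
  obtain x0 where "optimal_profile n m R k x0"
    using optimal_profile_exists[OF assms(5)] ..
  then obtain x where opt: "optimal_profile n m R k x"
    and fewest: "\<And>y. optimal_profile n m R k y
                   \<Longrightarrow> card (interior_indices n m x) \<le> card (interior_indices n m y)"
    using ex_has_least_nat[of "optimal_profile n m R k" x0 "\<lambda>x. card (interior_indices n m x)"]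
    by auto
  have "card (interior_indices n m x) \<le> 1"
  proof (rule ccontr)
    assume "\<not> card (interior_indices n m x) \<le> 1"
    then obtain i j where "i \<in> interior_indices n m x" "j \<in> interior_indices n m x" "i \<noteq> j"
      by (auto simp: card_le_Suc0_iff_eq[OF finite_interior_indices])
    with opt assms(3) obtain y where y: "optimal_profile n m R k y"
      and shrink: "interior_indices n m y \<subset> interior_indices n m x"
      by (rule optimal_profile_shrink_interior)
    have "card (interior_indices n m y) < card (interior_indices n m x)"
      using finite_interior_indices shrink by (rule psubset_card_mono)
    with fewest[OF y] show False
      by simp
  qed
  with opt show ?thesis
    unfolding interior_indices_def by (intro exI conjI)
qed

end
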